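(* There is a non-separable closed subspace of $BV[0,1]$ contained in $\mathcal{F}\cup\{0\}$.
   Context: $BV[0,1]$ is the Banach space of real-valued, left-continuous functions of bounded variation on $[0,1]$ with norm $\|f\|=|f(0)|+V(f)$, where $V(f)$ is the total variation of $f$ on $[0,1]$. $\mathcal{F}$ is the set of functions of bounded variation on $[0,1]$ whose set of jump discontinuities is dense in $[0,1]$. *)

theory Defs
  imports "HOL-Analysis.Analysis"
begin

text \<open>Functions on [0,1] are represented as real => real functions that vanish outside [0,1]
  (canonical representatives), so that equality of elements of BV[0,1] is equality of functions.\<close>

definition var01_sums :: "(real \<Rightarrow> real) \<Rightarrow> real set" where
  "var01_sums f = {(\<Sum>i<length xs - 1. \<bar>f (xs ! Suc i) - f (xs ! i)\<bar>) | xs.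
                     sorted xs \<and> set xs \<subseteq> {0..1}}"

definition bounded_var01 :: "(real \<Rightarrow> real) \<Rightarrow> bool" where
  "bounded_var01 f \<longleftrightarrow> bdd_above (var01_sums f)"

definition TV01 :: "(real \<Rightarrow> real) \<Rightarrow> real" where
  "TV01 f = Sup (var01_sums f)"

definition BV01 :: "(real \<Rightarrow> real) set" where
  "BV01 = {f. bounded_var01 f \<and> (\<forall>x\<in>{0<..1}. (f \<longlongrightarrow> f x) (at_left x))
              \<and> (\<forall>x. x \<notin> {0..1} \<longrightarrow> f x = 0)}"

definition bv_norm :: "(real \<Rightarrow> real) \<Rightarrow> real" where
  "bv_norm f = \<bar>f 0\<bar> + TV01 f"

definition jump_points :: "(real \<Rightarrow> real) \<Rightarrow> real set" where
  "jump_points f = {x\<in>{0..1}. \<not> continuous (at x within {0..1}) f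
       \<and> (0 < x \<longrightarrow> (\<exists>l. (f \<longlongrightarrow> l) (at_left x)))
       \<and> (x < 1 \<longrightarrow> (\<exists>l. (f \<longlongrightarrow> l) (at_right x)))}"

definition Fcal :: "(real \<Rightarrow> real) set" where
  "Fcal = {f. bounded_var01 f \<and> {0..1} \<subseteq> closure (jump_points f)}"

definition bv_linear_subspace :: "(real \<Rightarrow> real) set \<Rightarrow> bool" where
  "bv_linear_subspace S \<longleftrightarrow> S \<subseteq> BV01 \<and> (\<lambda>_. 0) \<in> S
     \<and> (\<forall>f\<in>S. \<forall>g\<in>S. (\<lambda>x. f x + g x) \<in> S) \<and> (\<forall>c::real. \<forall>f\<in>S. (\<lambda>x. c * f x) \<in> S)"

definition bv_closed :: "(real \<Rightarrow> real) set \<Rightarrow> bool" where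
  "bv_closed S \<longleftrightarrow> (\<forall>g f. (\<forall>n. g n \<in> S) \<and> f \<in> BV01
       \<and> (\<lambda>n. bv_norm (\<lambda>x. g n x - f x)) \<longlonglongrightarrow> 0 \<longrightarrow> f \<in> S)"

definition bv_separable :: "(real \<Rightarrow> real) set \<Rightarrow> bool" where
  "bv_separable S \<longleftrightarrow> (\<exists>D. countable D \<and> D \<subseteq> S
       \<and> (\<forall>f\<in>S. \<forall>e>0. \<exists>d\<in>D. bv_norm (\<lambda>x. f x - d x) < e))"

end

theory Submission
  imports Defs
begin

text \<open>Fix a Vitali set \<open>R\<close> of representatives of \<open>\<real>/\<rat>\<close>. For \<open>u \<in> R\<close> enumerate the dense set
  \<open>(u + \<rat>) \<inter> [0,1)\<close> as \<open>p\<^sub>0, p\<^sub>1, \<dots>\<close> and let \<open>g\<^sub>u(x)\<close> be the sum of \<open>2\<^sup>-\<^sup>n\<close> over all \<open>p\<^sub>n < x\<close>: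
  an increasing left-continuous function that jumps exactly on \<open>u + \<rat>\<close>. Take the closed span \<open>S\<close> of
  the \<open>g\<^sub>u\<close>. As the jump sets of different \<open>g\<^sub>u\<close> are disjoint and \<open>g\<^sub>u\<close> jumps by at least \<open>1\<close> at
  \<open>p\<^sub>0\<close>, the variation of \<open>\<Sum> c\<^sub>u g\<^sub>u - \<phi>\<close> is at least \<open>\<Sum> |c\<^sub>u|\<close> for every right-continuous \<open>\<phi>\<close>.
  Hence \<open>\<parallel>g\<^sub>u - g\<^sub>v\<parallel> \<ge> 2\<close> for \<open>u \<noteq> v\<close>, so \<open>S\<close> is not separable, and the only right-continuous
  element of \<open>S\<close> is \<open>0\<close>. If \<open>f \<in> S\<close> jumps at \<open>p\<close>, then for the representative \<open>u\<close> of \<open>p + \<rat>\<close> the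
  coefficients of \<open>g\<^sub>u\<close> in approximants of \<open>f\<close> converge to a nonzero limit, so \<open>f\<close> jumps on the whole dense coset \<open>p + \<rat>\<close>.\<close>

section \<open>Variation sums and the BV norm\<close>

fun var_sum :: "(real \<Rightarrow> real) \<Rightarrow> real list \<Rightarrow> real" where
  "var_sum F (x # y # zs) = \<bar>F y - F x\<bar> + var_sum F (y # zs)"
| "var_sum F _ = 0"

lemma sum_diffs_eq_var_sum: "(\<Sum>i<length xs - 1. \<bar>F (xs ! Suc i) - F (xs ! i)\<bar>) = var_sum F xs"
proof (induction F xs rule: var_sum.induct)
  case (1 F x y zs)
  have "(\<Sum>i<length (x # y # zs) - 1. \<bar>F ((x # y # zs) ! Suc i) - F ((x # y # zs) ! i)\<bar>)
     = \<bar>F y - F x\<bar> + (\<Sum>i<length zs. \<bar>F ((y # zs) ! Suc i) - F ((y # zs) ! i)\<bar>)"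
    by (simp add: sum.lessThan_Suc_shift del: sum.lessThan_Suc)
  with 1 show ?case by simp
qed auto

lemma var01_sums_eq: "var01_sums F = {var_sum F xs | xs. sorted xs \<and> set xs \<subseteq> {0..1}}"
  unfolding var01_sums_def sum_diffs_eq_var_sum ..

lemma var_sum_nonneg: "var_sum F xs \<ge> 0"
  by (induction F xs rule: var_sum.induct) auto

lemma var_sum_Cons_ge: "var_sum F xs \<le> var_sum F (x # xs)"
  by (cases xs) (auto simp: var_sum_nonneg)

lemma var_sum_snoc: "var_sum F (xs @ [a]) = var_sum F xs + (if xs = [] then 0 else \<bar>F a - F (last xs)\<bar>)"
  by (induction F xs rule: var_sum.induct) auto

lemma var_sum_add_le: "var_sum (\<lambda>x. F x + G x) xs \<le> var_sum F xs + var_sum G xs"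
  by (induction F xs rule: var_sum.induct)
     (auto intro: order_trans[OF _ add_mono[OF abs_triangle_ineq order_refl]])

lemma var_sum_scale: "var_sum (\<lambda>x. c * F x) xs = \<bar>c\<bar> * var_sum F xs"
  by (induction F xs rule: var_sum.induct) (auto simp: abs_mult right_diff_distrib[symmetric] distrib_left)

lemma var_sum_mono_on:
  assumes "mono_on {0..1} \<phi>" "sorted xs" "set xs \<subseteq> {0..1}" "xs \<noteq> []"
  shows "var_sum \<phi> xs = \<phi> (last xs) - \<phi> (hd xs)"
  using assms(2-)
proof (induction xs rule: induct_list012)
  case (3 x y zs)
  then show ?case using mono_onD[OF assms(1), of x y] by auto
qed auto

lemma var_sum_le_TV01:
  assumes "bounded_var01 F" "sorted xs" "set xs \<subseteq> {0..1}"
  shows "var_sum F xs \<le> TV01 F"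
  unfolding TV01_def
  by (rule cSup_upper) (use assms in \<open>auto simp: bounded_var01_def var01_sums_eq\<close>)

lemma TV01_le:
  assumes "\<And>xs. sorted xs \<Longrightarrow> set xs \<subseteq> {0..1} \<Longrightarrow> var_sum F xs \<le> B"
  shows "TV01 F \<le> B"
  unfolding TV01_def var01_sums_eq
  by (rule cSup_least) (auto intro!: assms exI[of _ "[]"])

lemma bounded_var01I:
  assumes "\<And>xs. sorted xs \<Longrightarrow> set xs \<subseteq> {0..1} \<Longrightarrow> var_sum F xs \<le> B"
  shows "bounded_var01 F"
  unfolding bounded_var01_def var01_sums_eq bdd_above_def using assms by blast

lemma bounded_var01_mono_on:
  assumes "mono_on {0..1} \<phi>"
  shows "bounded_var01 \<phi>" "TV01 \<phi> \<le> \<phi> 1 - \<phi> 0"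
proof -
  have *: "var_sum \<phi> xs \<le> \<phi> 1 - \<phi> 0" if "sorted xs" "set xs \<subseteq> {0..1}" for xs
  proof (cases "xs = []")
    case False
    have "hd xs \<in> {0..1}" "last xs \<in> {0..1}" using that hd_in_set[OF False] last_in_set[OF False] by blast+
    then show ?thesis
      using var_sum_mono_on[OF assms that False] mono_onD[OF assms, of 0 "hd xs"]
        mono_onD[OF assms, of "last xs" 1] by auto
  next
    case True
    then show ?thesis using mono_onD[OF assms, of 0 1] by simp
  qed
  show "bounded_var01 \<phi>" by (rule bounded_var01I[OF *])
  show "TV01 \<phi> \<le> \<phi> 1 - \<phi> 0" by (rule TV01_le[OF *])
qed

lemma TV01_nonneg: "bounded_var01 F \<Longrightarrow> TV01 F \<ge> 0"
  using var_sum_le_TV01[of F "[]"] by simp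

lemma abs_diff_le_TV01:
  assumes "bounded_var01 F" "x \<in> {0..1}" "y \<in> {0..1}"
  shows "\<bar>F y - F x\<bar> \<le> TV01 F"
proof (cases "x \<le> y")
  case True
  then show ?thesis using var_sum_le_TV01[OF assms(1), of "[x,y]"] assms by auto
next
  case False
  then show ?thesis using var_sum_le_TV01[OF assms(1), of "[y,x]"] assms by (auto simp: abs_minus_commute)
qed

lemma abs_le_bv_norm:
  assumes "bounded_var01 F" "x \<in> {0..1}"
  shows "\<bar>F x\<bar> \<le> bv_norm F"
  using abs_diff_le_TV01[OF assms(1) _ assms(2), of 0] unfolding bv_norm_def by auto

lemma TV01_le_bv_norm: "TV01 F \<le> bv_norm F"
  unfolding bv_norm_def by simp

lemma bounded_var01_add:
  assumes "bounded_var01 F" "bounded_var01 G"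
  shows "bounded_var01 (\<lambda>x. F x + G x)" "TV01 (\<lambda>x. F x + G x) \<le> TV01 F + TV01 G"
proof -
  have *: "var_sum (\<lambda>x. F x + G x) xs \<le> TV01 F + TV01 G" if "sorted xs" "set xs \<subseteq> {0..1}" for xs
    using var_sum_add_le[of F G xs] var_sum_le_TV01[OF assms(1) that] var_sum_le_TV01[OF assms(2) that]
    by linarith
  show "bounded_var01 (\<lambda>x. F x + G x)" by (rule bounded_var01I[OF *])
  show "TV01 (\<lambda>x. F x + G x) \<le> TV01 F + TV01 G" by (rule TV01_le[OF *])
qed

lemma bounded_var01_scale:
  assumes "bounded_var01 F"
  shows "bounded_var01 (\<lambda>x. c * F x)" "TV01 (\<lambda>x. c * F x) \<le> \<bar>c\<bar> * TV01 F"
proof -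
  have *: "var_sum (\<lambda>x. c * F x) xs \<le> \<bar>c\<bar> * TV01 F" if "sorted xs" "set xs \<subseteq> {0..1}" for xs
    using var_sum_le_TV01[OF assms that] by (simp add: var_sum_scale mult_left_mono)
  show "bounded_var01 (\<lambda>x. c * F x)" by (rule bounded_var01I[OF *])
  show "TV01 (\<lambda>x. c * F x) \<le> \<bar>c\<bar> * TV01 F" by (rule TV01_le[OF *])
qed

lemma bounded_var01_diff:
  "bounded_var01 F \<Longrightarrow> bounded_var01 G \<Longrightarrow> bounded_var01 (\<lambda>x. F x - G x)"
  using bounded_var01_add(1)[OF _ bounded_var01_scale(1), of F G "-1"] by simp

lemma bounded_var01_zero: "bounded_var01 (\<lambda>x. 0)"
  by (rule bounded_var01_mono_on) (simp add: mono_on_def)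

lemma bv_norm_zero: "bv_norm (\<lambda>x. 0) = 0"
  using bounded_var01_mono_on(2)[of "\<lambda>x. 0"] TV01_nonneg[OF bounded_var01_zero]
  by (simp add: bv_norm_def mono_on_def)

lemma bounded_var01_sum:
  "finite U \<Longrightarrow> (\<And>v. v \<in> U \<Longrightarrow> bounded_var01 (f v)) \<Longrightarrow> bounded_var01 (\<lambda>x. \<Sum>v\<in>U. f v x)"
  by (induction U rule: finite_induct) (auto intro: bounded_var01_zero bounded_var01_add(1))

lemma bv_norm_nonneg: "bounded_var01 F \<Longrightarrow> bv_norm F \<ge> 0"
  using TV01_nonneg[of F] unfolding bv_norm_def by linarith

lemma bv_norm_add_le:
  assumes "bounded_var01 F" "bounded_var01 G"
  shows "bv_norm (\<lambda>x. F x + G x) \<le> bv_norm F + bv_norm G"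
  using bounded_var01_add(2)[OF assms] abs_triangle_ineq[of "F 0" "G 0"] unfolding bv_norm_def by linarith

lemma bv_norm_scale_le:
  assumes "bounded_var01 F"
  shows "bv_norm (\<lambda>x. c * F x) \<le> \<bar>c\<bar> * bv_norm F"
  using bounded_var01_scale(2)[OF assms, of c] unfolding bv_norm_def by (simp add: abs_mult distrib_left)

lemma bv_norm_diff_triangle:
  assumes "bounded_var01 F" "bounded_var01 G" "bounded_var01 H"
  shows "bv_norm (\<lambda>x. F x - H x) \<le> bv_norm (\<lambda>x. F x - G x) + bv_norm (\<lambda>x. G x - H x)"
  using bv_norm_add_le[OF bounded_var01_diff[OF assms(1,2)] bounded_var01_diff[OF assms(2,3)]] by simp

lemma bv_norm_diff_commute:
  assumes "bounded_var01 F" "bounded_var01 G"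
  shows "bv_norm (\<lambda>x. F x - G x) = bv_norm (\<lambda>x. G x - F x)"
proof -
  have "bv_norm (\<lambda>x. F x - G x) \<le> bv_norm (\<lambda>x. G x - F x)"
    if "bounded_var01 F" "bounded_var01 G" for F G
    using bv_norm_scale_le[OF bounded_var01_diff[OF that(2,1)], of "-1"] by simp
  then show ?thesis using assms by (meson order_antisym)
qed

lemma BV01_bounded_var: "f \<in> BV01 \<Longrightarrow> bounded_var01 f"
  unfolding BV01_def by auto

lemma BV01_zero: "(\<lambda>x. 0) \<in> BV01"
  unfolding BV01_def using bounded_var01_zero by auto

lemma BV01_add: "f \<in> BV01 \<Longrightarrow> g \<in> BV01 \<Longrightarrow> (\<lambda>x. f x + g x) \<in> BV01"
  unfolding BV01_def using bounded_var01_add(1) by (auto intro!: tendsto_intros)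

lemma BV01_scale: "f \<in> BV01 \<Longrightarrow> (\<lambda>x. c * f x) \<in> BV01"
  unfolding BV01_def using bounded_var01_scale(1) by (auto intro!: tendsto_intros)

section \<open>One-sided limits and jumps of functions of bounded variation\<close>

lemma mono_on_right_limit:
  fixes \<phi> :: "real \<Rightarrow> real"
  assumes mono: "mono_on {a..b} \<phi>" and p: "a \<le> p" "p < b"
  shows "\<exists>L. (\<phi> \<longlongrightarrow> L) (at_right p)"
proof -
  define L where "L = Inf (\<phi> ` {p<..b})"
  have ne: "\<phi> ` {p<..b} \<noteq> {}" using p by auto
  have bdd: "bdd_below (\<phi> ` {p<..b})"
    by (rule bdd_belowI[of _ "\<phi> p"]) (use p in \<open>auto intro: mono_onD[OF mono]\<close>)
  have "(\<phi> \<longlongrightarrow> L) (at_right p)"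
  proof (rule order_tendstoI)
    fix c assume "c < L"
    have "eventually (\<lambda>y. y \<in> {p<..<b}) (at_right p)" using eventually_at_right_real p by auto
    then show "eventually (\<lambda>y. c < \<phi> y) (at_right p)"
    proof (rule eventually_mono)
      fix y assume "y \<in> {p<..<b}"
      then have "L \<le> \<phi> y" unfolding L_def by (intro cInf_lower bdd) auto
      then show "c < \<phi> y" using \<open>c < L\<close> by simp
    qed
  next
    fix c assume "L < c"
    then obtain y0 where y0: "y0 \<in> {p<..b}" "\<phi> y0 < c" using cInf_lessD[OF ne] unfolding L_def by blast
    have "eventually (\<lambda>y. y \<in> {p<..<y0}) (at_right p)" using eventually_at_right_real y0 by auto
    then show "eventually (\<lambda>y. \<phi> y < c) (at_right p)"
    proof (rule eventually_mono)
      fix y assume "y \<in> {p<..<y0}"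
      then have "\<phi> y \<le> \<phi> y0" using p y0 by (intro mono_onD[OF mono]) auto
      then show "\<phi> y < c" using y0 by simp
    qed
  qed
  then show ?thesis ..
qed

lemma mono_on_left_limit:
  fixes \<phi> :: "real \<Rightarrow> real"
  assumes mono: "mono_on {a..b} \<phi>" and p: "a < p" "p \<le> b"
  shows "\<exists>L. (\<phi> \<longlongrightarrow> L) (at_left p)"
proof -
  have "mono_on {-b..-a} (\<lambda>x. - \<phi> (- x))"
    by (rule mono_onI) (auto intro: mono_onD[OF mono])
  then obtain L where "((\<lambda>x. - \<phi> (- x)) \<longlongrightarrow> L) (at_right (- p))"
    using mono_on_right_limit[of "-b" "-a" _ "-p"] p by auto
  then have "((\<lambda>x. \<phi> (- x)) \<longlongrightarrow> - L) (at_right (- p))"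
    using tendsto_minus by fastforce
  then show ?thesis by (auto simp: filterlim_at_left_to_right[of \<phi>])
qed

definition partial_var :: "(real \<Rightarrow> real) \<Rightarrow> real \<Rightarrow> real" where
  "partial_var f x = Sup {var_sum f xs | xs. sorted xs \<and> set xs \<subseteq> {0..x}}"

lemma partial_var_step:
  assumes bv: "bounded_var01 f" and xy: "0 \<le> x" "x \<le> y" "y \<le> 1"
  shows "partial_var f x + \<bar>f y - f x\<bar> \<le> partial_var f y"
proof -
  have bddy: "bdd_above {var_sum f xs | xs. sorted xs \<and> set xs \<subseteq> {0..y}}"
    by (rule bdd_aboveI[of _ "TV01 f"]) (use xy in \<open>auto intro!: var_sum_le_TV01[OF bv]\<close>)
  have "v + \<bar>f y - f x\<bar> \<le> partial_var f y" if v: "v \<in> {var_sum f xs | xs. sorted xs \<and> set xs \<subseteq> {0..x}}" for v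
  proof -
    obtain xs where xs: "v = var_sum f xs" "sorted xs" "set xs \<subseteq> {0..x}" using v by auto
    have "v \<le> var_sum f (xs @ [x])" using xs(1) var_sum_snoc[of f xs x] by simp
    also have "\<dots> + \<bar>f y - f x\<bar> = var_sum f (xs @ [x, y])" using var_sum_snoc[of f "xs @ [x]" y] by simp
    also have "\<dots> \<le> partial_var f y"
    proof -
      have "sorted (xs @ [x, y])" "set (xs @ [x, y]) \<subseteq> {0..y}" using xs xy by (auto simp: sorted_append)
      then show ?thesis unfolding partial_var_def by (blast intro: cSup_upper[OF _ bddy])
    qed
    finally show ?thesis by simp
  qed
  then have "partial_var f x \<le> partial_var f y - \<bar>f y - f x\<bar>"
    unfolding partial_var_def[of f x] by (intro cSup_least) (auto intro!: exI[of _ "[]"] simp: algebra_simps)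
  then show ?thesis by simp
qed

text \<open>Jordan decomposition: \<open>f\<close> is the difference of the increasing functions
  \<open>partial_var f\<close> and \<open>partial_var f - f\<close>.\<close>

lemma mono_on_partial_var:
  assumes "bounded_var01 f"
  shows "mono_on {0..1} (partial_var f)" "mono_on {0..1} (\<lambda>x. partial_var f x - f x)"
  using partial_var_step[OF assms] by (auto intro!: mono_onI) (smt (verit))+

lemma bounded_var01_right_limit:
  assumes bv: "bounded_var01 f" and p: "0 \<le> p" "p < 1"
  shows "\<exists>L. (f \<longlongrightarrow> L) (at_right p)"
proof -
  obtain L1 L2 where "(partial_var f \<longlongrightarrow> L1) (at_right p)"
    "((\<lambda>x. partial_var f x - f x) \<longlongrightarrow> L2) (at_right p)"
    using mono_on_right_limit[OF mono_on_partial_var(1)[OF bv] p]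
      mono_on_right_limit[OF mono_on_partial_var(2)[OF bv] p] by blast
  then have "((\<lambda>x. partial_var f x - (partial_var f x - f x)) \<longlongrightarrow> L1 - L2) (at_right p)"
    by (rule tendsto_diff)
  then show ?thesis by auto
qed

lemma bounded_var01_left_limit:
  assumes bv: "bounded_var01 f" and p: "0 < p" "p \<le> 1"
  shows "\<exists>L. (f \<longlongrightarrow> L) (at_left p)"
proof -
  obtain L1 L2 where "(partial_var f \<longlongrightarrow> L1) (at_left p)"
    "((\<lambda>x. partial_var f x - f x) \<longlongrightarrow> L2) (at_left p)"
    using mono_on_left_limit[OF mono_on_partial_var(1)[OF bv] p]
      mono_on_left_limit[OF mono_on_partial_var(2)[OF bv] p] by blast
  then have "((\<lambda>x. partial_var f x - (partial_var f x - f x)) \<longlongrightarrow> L1 - L2) (at_left p)"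
    by (rule tendsto_diff)
  then show ?thesis by auto
qed

lemma var_sum_pairs:
  assumes "sorted_wrt (\<lambda>a b. a + d \<le> b) ps" "d \<ge> 0"
  shows "sorted (concat (map (\<lambda>a. [a, a + d]) ps)) \<and>
    (\<Sum>a\<leftarrow>ps. \<bar>F (a + d) - F a\<bar>) \<le> var_sum F (concat (map (\<lambda>a. [a, a + d]) ps))"
  using assms
proof (induction ps)
  case (Cons a ps)
  let ?r = "concat (map (\<lambda>a. [a, a + d]) ps)"
  have "\<forall>y\<in>set ?r. a + d \<le> y" using Cons.prems by auto
  then have "sorted (a # (a + d) # ?r)" using Cons by auto
  moreover have "var_sum F (a # (a + d) # ?r) = \<bar>F (a + d) - F a\<bar> + var_sum F ((a + d) # ?r)" by simp
  ultimately show ?case using Cons var_sum_Cons_ge[of F ?r "a + d"] by auto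
qed simp

lemma sum_increments_le_TV01:
  assumes bv: "bounded_var01 F" and P: "finite P" "P \<subseteq> {0..1}" and d: "0 \<le> d"
    and in01: "\<And>p. p \<in> P \<Longrightarrow> p + d \<le> 1"
    and sep: "\<And>p q. p \<in> P \<Longrightarrow> q \<in> P \<Longrightarrow> p < q \<Longrightarrow> p + d \<le> q"
  shows "(\<Sum>p\<in>P. \<bar>F (p + d) - F p\<bar>) \<le> TV01 F"
proof -
  define ps where "ps = sorted_list_of_set P"
  have "sorted_wrt (\<lambda>a b. a + d \<le> b) ps"
    unfolding ps_def by (rule sorted_wrt_mono_rel[OF _ strict_sorted_list_of_set]) (use P(1) in \<open>auto intro: sep\<close>)
  note pairs = var_sum_pairs[OF this d, of F]
  have "set (concat (map (\<lambda>a. [a, a + d]) ps)) \<subseteq> {0..1}"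
    using P d in01 unfolding ps_def by force
  with pairs[THEN conjunct1] pairs[THEN conjunct2] have "(\<Sum>a\<leftarrow>ps. \<bar>F (a + d) - F a\<bar>) \<le> TV01 F"
    by (meson order_trans var_sum_le_TV01[OF bv])
  then show ?thesis
    using sum_list_distinct_conv_sum_set[of ps "\<lambda>a. \<bar>F (a + d) - F a\<bar>"] P(1) unfolding ps_def by simp
qed

lemma sum_right_jumps_le_TV01:
  assumes bv: "bounded_var01 F" and P: "finite P" "P \<subseteq> {0..<1}"
    and L: "\<And>p. p \<in> P \<Longrightarrow> (F \<longlongrightarrow> L p) (at_right p)"
  shows "(\<Sum>p\<in>P. \<bar>L p - F p\<bar>) \<le> TV01 F"
proof (rule tendsto_upperbound)
  have "((\<lambda>d. F (d + p)) \<longlongrightarrow> L p) (at_right 0)" if "p \<in> P" for p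
    using L[OF that] by (simp add: filterlim_at_right_to_0[of F _ p])
  then show "((\<lambda>d. \<Sum>p\<in>P. \<bar>F (p + d) - F p\<bar>) \<longlongrightarrow> (\<Sum>p\<in>P. \<bar>L p - F p\<bar>)) (at_right 0)"
    by (auto intro!: tendsto_intros simp: add.commute)
  have small: "eventually (\<lambda>d. 0 < d \<and> d < c) (at_right 0)" if "0 < c" for c :: real
    using eventually_at_right_real[OF that] by (rule eventually_mono) auto
  have "eventually (\<lambda>d. 0 \<le> d \<and> (\<forall>p\<in>P. p + d \<le> 1 \<and> (\<forall>q\<in>P. p < q \<longrightarrow> p + d \<le> q))) (at_right 0)"
  proof (intro eventually_conj eventually_ball_finite ballI P(1))
    show "eventually (\<lambda>d. 0 \<le> d) (at_right (0::real))"
      using small[of 1] by (auto elim: eventually_mono)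
    fix p q assume "p \<in> P" "q \<in> P"
    then have "p < 1" using P(2) by auto
    then show "eventually (\<lambda>d. p + d \<le> 1) (at_right 0)"
      using small[of "1 - p"] by (auto elim: eventually_mono)
    show "eventually (\<lambda>d. p < q \<longrightarrow> p + d \<le> q) (at_right 0)"
      by (cases "p < q") (use small[of "q - p"] in \<open>auto elim: eventually_mono\<close>)
  qed
  then show "eventually (\<lambda>d. (\<Sum>p\<in>P. \<bar>F (p + d) - F p\<bar>) \<le> TV01 F) (at_right 0)"
    by (rule eventually_mono) (use P in \<open>auto intro!: sum_increments_le_TV01[OF bv]\<close>)
qed simp

section \<open>Dyadic masses of sets of natural numbers\<close>

definition dyadic_mass :: "(nat \<Rightarrow> bool) \<Rightarrow> real" where
  "dyadic_mass P = (\<Sum>n. if P n then (1/2) ^ n else 0)"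

lemma summable_dyadic_mass: "summable (\<lambda>n. if P n then (1/2::real) ^ n else 0)"
  by (rule summable_comparison_test'[OF summable_geometric[of "1/2"]]) auto

lemma dyadic_mass_nonneg: "dyadic_mass P \<ge> 0"
  unfolding dyadic_mass_def by (intro suminf_nonneg summable_dyadic_mass) auto

lemma dyadic_mass_mono: "(\<And>n. P n \<Longrightarrow> Q n) \<Longrightarrow> dyadic_mass P \<le> dyadic_mass Q"
  unfolding dyadic_mass_def by (intro suminf_le summable_dyadic_mass) auto

lemma dyadic_mass_le_2: "dyadic_mass P \<le> 2"
  using dyadic_mass_mono[of P "\<lambda>_. True"] suminf_geometric[of "1/2::real"]
  by (simp add: dyadic_mass_def)

lemma dyadic_mass_ge: "P n \<Longrightarrow> (1/2) ^ n \<le> dyadic_mass P"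
  using sum_le_suminf[OF summable_dyadic_mass, of "{n}" P] by (auto simp: dyadic_mass_def)

lemma dyadic_mass_empty: "(\<And>n. \<not> P n) \<Longrightarrow> dyadic_mass P = 0"
  unfolding dyadic_mass_def by simp

lemma dyadic_mass_diff:
  "(\<And>n. P n \<Longrightarrow> Q n) \<Longrightarrow> dyadic_mass Q - dyadic_mass P = dyadic_mass (\<lambda>n. Q n \<and> \<not> P n)"
  unfolding dyadic_mass_def
  by (subst suminf_diff[OF summable_dyadic_mass summable_dyadic_mass]) (auto intro!: arg_cong[where f=suminf])

lemma dyadic_mass_le_tail:
  assumes "\<And>n. n < N \<Longrightarrow> \<not> P n"
  shows "dyadic_mass P \<le> 2 * (1/2) ^ N"
proof -
  have "dyadic_mass P = (\<Sum>n. if P (n + N) then (1/2) ^ (n + N) else 0)"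
    unfolding dyadic_mass_def using assms
    by (subst suminf_split_initial_segment[OF summable_dyadic_mass, where k=N]) simp
  also have "\<dots> \<le> (\<Sum>n. (1/2) ^ N * (1/2) ^ n)"
    by (intro suminf_le summable_mult summable_geometric
        summable_ignore_initial_segment[OF summable_dyadic_mass]) (auto simp: power_add)
  also have "\<dots> = 2 * (1/2) ^ N"
    by (subst suminf_mult) (auto simp: suminf_geometric)
  finally show ?thesis .
qed

lemma tendsto_dyadic_mass_0:
  assumes "\<And>n. eventually (\<lambda>y. \<not> P n y) F"
  shows "((\<lambda>y. dyadic_mass (\<lambda>n. P n y)) \<longlongrightarrow> 0) F"
proof (rule tendstoI)
  fix e :: real assume "e > 0"
  then obtain N where N: "(1/2::real) ^ N < e / 2" using real_arch_pow_inv[of "e/2" "1/2"] by auto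
  have "eventually (\<lambda>y. \<forall>n\<in>{..<N}. \<not> P n y) F"
    by (rule eventually_ball_finite) (auto intro: assms)
  then show "eventually (\<lambda>y. dist (dyadic_mass (\<lambda>n. P n y)) 0 < e) F"
  proof (rule eventually_mono)
    fix y assume "\<forall>n\<in>{..<N}. \<not> P n y"
    then have "dyadic_mass (\<lambda>n. P n y) \<le> 2 * (1/2) ^ N" by (intro dyadic_mass_le_tail) auto
    then show "dist (dyadic_mass (\<lambda>n. P n y)) 0 < e" using dyadic_mass_nonneg[of "\<lambda>n. P n y"] N by simp
  qed
qed

section \<open>Rational cosets and their staircase functions\<close>

text \<open>\<open>rat_rep t\<close> chooses a representative of the coset \<open>t + \<rat>\<close>, so \<open>rat_reps\<close> is a Vitali set,
  and \<open>coset_pt u\<close> enumerates \<open>(u + \<rat>) \<inter> [0,1)\<close>.\<close>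

definition rat_enum :: "nat \<Rightarrow> real" where
  "rat_enum n = of_rat (from_nat n)"

definition rat_rep :: "real \<Rightarrow> real" where
  "rat_rep t = (SOME s. s - t \<in> \<rat>)"

definition rat_reps :: "real set" where
  "rat_reps = range rat_rep"

definition coset_pt :: "real \<Rightarrow> nat \<Rightarrow> real" where
  "coset_pt u n = frac (u + rat_enum n)"

definition coset_stair :: "real \<Rightarrow> real \<Rightarrow> real" where
  "coset_stair u x = (if x \<le> 1 then dyadic_mass (\<lambda>n. coset_pt u n < x) else 0)"

definition coset_jump :: "real \<Rightarrow> real \<Rightarrow> real" where
  "coset_jump u p = dyadic_mass (\<lambda>n. coset_pt u n = p)"

lemma rat_rep_diff_Rats: "rat_rep t - t \<in> \<rat>"
  unfolding rat_rep_def by (rule someI[of _ t]) simp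

lemma diff_rat_rep_Rats: "t - rat_rep t \<in> \<rat>"
  using rat_rep_diff_Rats[of t] Rats_minus_iff[of "rat_rep t - t"] by simp

lemma rat_rep_eq:
  assumes "s - t \<in> \<rat>"
  shows "rat_rep s = rat_rep t"
proof -
  have "(x - s \<in> \<rat>) = (x - t \<in> \<rat>)" for x
    using assms Rats_add[of "x - s" "s - t"] Rats_diff[of "x - t" "s - t"] by auto
  then show ?thesis unfolding rat_rep_def by simp
qed

lemma rat_rep_reps: "u \<in> rat_reps \<Longrightarrow> rat_rep u = u"
  unfolding rat_reps_def using rat_rep_eq[OF rat_rep_diff_Rats] by auto

lemma rat_rep_in_reps: "rat_rep t \<in> rat_reps"
  unfolding rat_reps_def by simp

lemma uncountable_rat_reps: "uncountable rat_reps"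
proof
  assume "countable rat_reps"
  then have "countable (\<Union>u\<in>rat_reps. (\<lambda>q. u + q) ` \<rat>)"
    by (intro countable_UN countable_image countable_rat)
  moreover have "x \<in> (\<Union>u\<in>rat_reps. (\<lambda>q. u + q) ` \<rat>)" for x
    using diff_rat_rep_Rats[of x] rat_rep_in_reps[of x]
    by (auto intro!: bexI[of _ "rat_rep x"] image_eqI[of _ _ "x - rat_rep x"])
  ultimately have "countable (UNIV :: real set)" by (blast intro: countable_subset)
  then show False using uncountable_UNIV_real by simp
qed

lemma coset_pt_range: "0 \<le> coset_pt u n" "coset_pt u n < 1"
  unfolding coset_pt_def by (simp_all add: frac_lt_1)

lemma coset_pt_diff_Rats: "coset_pt u n - u \<in> \<rat>"
proof -
  have "coset_pt u n - u = rat_enum n - of_int \<lfloor>u + rat_enum n\<rfloor>"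
    unfolding coset_pt_def frac_def by simp
  then show ?thesis by (simp add: rat_enum_def Rats_diff)
qed

lemma rat_rep_coset_pt: "u \<in> rat_reps \<Longrightarrow> rat_rep (coset_pt u n) = u"
  using rat_rep_eq[OF coset_pt_diff_Rats] rat_rep_reps by simp

lemma coset_pt_surj:
  assumes "p - u \<in> \<rat>" "0 \<le> p" "p < 1"
  shows "\<exists>n. coset_pt u n = p"
proof -
  obtain n where "rat_enum n = p - u"
    using assms(1) unfolding rat_enum_def by (auto elim!: Rats_cases) (metis from_nat_to_nat)
  then have "coset_pt u n = p" unfolding coset_pt_def using assms by (simp add: frac_eq)
  then show ?thesis ..
qed

lemma coset_jump_pos:
  assumes "p - u \<in> \<rat>" "0 \<le> p" "p < 1"
  shows "coset_jump u p > 0"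
proof -
  obtain n where "coset_pt u n = p" using coset_pt_surj assms by blast
  then have "(1/2) ^ n \<le> coset_jump u p" unfolding coset_jump_def by (intro dyadic_mass_ge)
  then show ?thesis using zero_less_power[of "1/2::real" n] by linarith
qed

lemma coset_jump_eq_0:
  assumes "u \<in> rat_reps" "u \<noteq> rat_rep p"
  shows "coset_jump u p = 0"
  unfolding coset_jump_def using assms rat_rep_coset_pt by (auto intro: dyadic_mass_empty)

lemma coset_jump_ge_1: "coset_jump u (coset_pt u 0) \<ge> 1"
  using dyadic_mass_ge[of "\<lambda>n. coset_pt u n = coset_pt u 0" 0] unfolding coset_jump_def by simp

lemma coset_stair_diff:
  assumes "x \<le> y" "y \<le> 1"
  shows "coset_stair u y - coset_stair u x = dyadic_mass (\<lambda>n. x \<le> coset_pt u n \<and> coset_pt u n < y)"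
proof -
  have "dyadic_mass (\<lambda>n. coset_pt u n < y) - dyadic_mass (\<lambda>n. coset_pt u n < x)
      = dyadic_mass (\<lambda>n. coset_pt u n < y \<and> \<not> coset_pt u n < x)"
    by (rule dyadic_mass_diff) (use assms in auto)
  then show ?thesis unfolding coset_stair_def using assms by (simp add: not_less conj_commute)
qed

lemma coset_stair_bounds: "0 \<le> coset_stair u x" "coset_stair u x \<le> 2"
  unfolding coset_stair_def using dyadic_mass_nonneg dyadic_mass_le_2 by auto

lemma coset_stair_outside:
  assumes "x \<notin> {0..1}"
  shows "coset_stair u x = 0"
proof (cases "x \<le> 1")
  case True
  then have "\<not> coset_pt u n < x" for n using assms coset_pt_range(1)[of u n] by auto
  then show ?thesis unfolding coset_stair_def by (simp add: dyadic_mass_empty)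
qed (simp add: coset_stair_def)

lemma mono_on_coset_stair: "mono_on {0..1} (coset_stair u)"
proof (rule mono_onI)
  fix x y :: real assume "x \<in> {0..1}" "y \<in> {0..1}" "x \<le> y"
  then show "coset_stair u x \<le> coset_stair u y"
    using coset_stair_diff[of x y u] dyadic_mass_nonneg[of "\<lambda>n. x \<le> coset_pt u n \<and> coset_pt u n < y"]
    by simp
qed

lemma coset_stair_left_continuous:
  assumes "0 < p" "p \<le> 1"
  shows "(coset_stair u \<longlongrightarrow> coset_stair u p) (at_left p)"
proof -
  have "((\<lambda>y. dyadic_mass (\<lambda>n. y \<le> coset_pt u n \<and> coset_pt u n < p)) \<longlongrightarrow> 0) (at_left p)"
  proof (rule tendsto_dyadic_mass_0)
    fix n
    show "eventually (\<lambda>y. \<not> (y \<le> coset_pt u n \<and> coset_pt u n < p)) (at_left p)"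
      by (cases "coset_pt u n < p") (auto elim: eventually_mono[OF eventually_at_left_real])
  qed
  moreover have "eventually (\<lambda>y. dyadic_mass (\<lambda>n. y \<le> coset_pt u n \<and> coset_pt u n < p)
      = coset_stair u p - coset_stair u y) (at_left p)"
    using eventually_at_left_real[OF assms(1)] by eventually_elim (use assms in \<open>simp add: coset_stair_diff\<close>)
  ultimately have "((\<lambda>y. coset_stair u p - coset_stair u y) \<longlongrightarrow> 0) (at_left p)"
    by (rule Lim_transform_eventually)
  then have "((\<lambda>y. coset_stair u p - (coset_stair u p - coset_stair u y)) \<longlongrightarrow> coset_stair u p - 0) (at_left p)"
    by (intro tendsto_intros)
  then show ?thesis by simp
qed

lemma coset_stair_right_limit:
  assumes "0 \<le> p" "p < 1"
  shows "(coset_stair u \<longlongrightarrow> coset_stair u p + coset_jump u p) (at_right p)"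
proof -
  have "((\<lambda>y. dyadic_mass (\<lambda>n. p < coset_pt u n \<and> coset_pt u n < y)) \<longlongrightarrow> 0) (at_right p)"
  proof (rule tendsto_dyadic_mass_0)
    fix n
    show "eventually (\<lambda>y. \<not> (p < coset_pt u n \<and> coset_pt u n < y)) (at_right p)"
      by (cases "p < coset_pt u n") (auto elim: eventually_mono[OF eventually_at_right_real])
  qed
  moreover have "eventually (\<lambda>y. dyadic_mass (\<lambda>n. p < coset_pt u n \<and> coset_pt u n < y)
      = coset_stair u y - (coset_stair u p + coset_jump u p)) (at_right p)"
    using eventually_at_right_real[OF assms(2)]
  proof eventually_elim
    case (elim y)
    then have "coset_stair u y - coset_stair u p = dyadic_mass (\<lambda>n. p \<le> coset_pt u n \<and> coset_pt u n < y)"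
      by (intro coset_stair_diff) auto
    moreover have "dyadic_mass (\<lambda>n. p \<le> coset_pt u n \<and> coset_pt u n < y) - coset_jump u p
        = dyadic_mass (\<lambda>n. p < coset_pt u n \<and> coset_pt u n < y)"
      unfolding coset_jump_def using elim by (subst dyadic_mass_diff) (auto intro!: arg_cong[where f=dyadic_mass])
    ultimately show ?case by simp
  qed
  ultimately have "((\<lambda>y. coset_stair u y - (coset_stair u p + coset_jump u p)) \<longlongrightarrow> 0) (at_right p)"
    by (rule Lim_transform_eventually)
  then show ?thesis by (rule LIM_zero_cancel)
qed

lemma coset_stair_BV01: "coset_stair u \<in> BV01"
  unfolding BV01_def
  using bounded_var01_mono_on(1)[OF mono_on_coset_stair] coset_stair_left_continuous coset_stair_outside
  by auto

definition stair_comb :: "real set \<Rightarrow> (real \<Rightarrow> real) \<Rightarrow> real \<Rightarrow> real" where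
  "stair_comb U C = (\<lambda>x. \<Sum>v\<in>U. C v * coset_stair v x)"

lemma stair_comb_BV01:
  assumes "finite U"
  shows "stair_comb U C \<in> BV01"
proof -
  have "bounded_var01 (\<lambda>x. \<Sum>v\<in>U. C v * coset_stair v x)"
    using assms by (rule bounded_var01_sum) (intro bounded_var01_scale(1) BV01_bounded_var[OF coset_stair_BV01])
  moreover have "((\<lambda>x. \<Sum>v\<in>U. C v * coset_stair v x) \<longlongrightarrow> (\<Sum>v\<in>U. C v * coset_stair v p)) (at_left p)"
    if "p \<in> {0<..1}" for p
    using that by (intro tendsto_sum tendsto_mult tendsto_const coset_stair_left_continuous) auto
  ultimately show ?thesis
    unfolding BV01_def stair_comb_def by (simp add: coset_stair_outside)
qed

lemma bounded_var01_stair_comb: "finite U \<Longrightarrow> bounded_var01 (stair_comb U C)"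
  using stair_comb_BV01 BV01_bounded_var by blast

lemma abs_stair_comb_le: "\<bar>stair_comb U C x\<bar> \<le> 2 * (\<Sum>v\<in>U. \<bar>C v\<bar>)"
proof -
  have "\<bar>stair_comb U C x\<bar> \<le> (\<Sum>v\<in>U. \<bar>C v * coset_stair v x\<bar>)"
    unfolding stair_comb_def by (rule sum_abs)
  also have "\<dots> \<le> (\<Sum>v\<in>U. 2 * \<bar>C v\<bar>)"
    using coset_stair_bounds by (intro sum_mono) (auto simp: abs_mult mult_left_mono mult.commute)
  finally show ?thesis by (simp add: sum_distrib_left)
qed

text \<open>Only the staircase of the coset of \<open>p\<close> jumps at \<open>p\<close>.\<close>

lemma stair_comb_right_limit:
  assumes U: "finite U" "U \<subseteq> rat_reps" and p: "0 \<le> p" "p < 1"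
  shows "(stair_comb U C \<longlongrightarrow> stair_comb U C p
     + (if rat_rep p \<in> U then C (rat_rep p) * coset_jump (rat_rep p) p else 0)) (at_right p)"
proof -
  have "(stair_comb U C \<longlongrightarrow> (\<Sum>v\<in>U. C v * (coset_stair v p + coset_jump v p))) (at_right p)"
    unfolding stair_comb_def by (intro tendsto_intros coset_stair_right_limit p)
  moreover have "(\<Sum>v\<in>U. C v * coset_jump v p) = (\<Sum>v\<in>U. if v = rat_rep p then C v * coset_jump v p else 0)"
    using coset_jump_eq_0 U(2) by (intro sum.cong) auto
  ultimately show ?thesis
    unfolding stair_comb_def by (simp add: distrib_left sum.distrib sum.delta[OF U(1)])
qed

text \<open>The key estimate: at \<open>coset_pt v 0\<close> the staircase of \<open>v\<close> jumps by at least \<open>1\<close>, and no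
  right-continuous function can cancel these jumps.\<close>

lemma sum_abs_coeffs_le_TV01:
  assumes U: "finite U" "U \<subseteq> rat_reps" and bv: "bounded_var01 \<phi>"
    and rc: "\<And>p. 0 \<le> p \<Longrightarrow> p < 1 \<Longrightarrow> (\<phi> \<longlongrightarrow> \<phi> p) (at_right p)"
  shows "(\<Sum>v\<in>U. \<bar>C v\<bar>) \<le> TV01 (\<lambda>x. stair_comb U C x - \<phi> x)"
proof -
  define F where "F = (\<lambda>x. stair_comb U C x - \<phi> x)"
  define pt where "pt v = coset_pt v 0" for v
  define L where "L p = F p + C (rat_rep p) * coset_jump (rat_rep p) p" for p
  have rep_pt: "rat_rep (pt v) = v" if "v \<in> U" for v
    unfolding pt_def using U(2) that by (auto intro: rat_rep_coset_pt)
  then have inj: "inj_on pt U" by (metis inj_onI)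
  have pt_U: "pt ` U \<subseteq> {0..<1}" unfolding pt_def using coset_pt_range by auto
  have "(F \<longlongrightarrow> L p) (at_right p)" if "p \<in> pt ` U" for p
  proof -
    have p: "rat_rep p \<in> U" "0 \<le> p" "p < 1" using that rep_pt pt_U by auto
    have "(F \<longlongrightarrow> (stair_comb U C p + C (rat_rep p) * coset_jump (rat_rep p) p) - \<phi> p) (at_right p)"
      unfolding F_def using stair_comb_right_limit[OF U p(2,3), of C] p(1) by (intro tendsto_diff rc p) simp
    then show ?thesis unfolding L_def F_def by (simp add: algebra_simps)
  qed
  have jump_ge: "\<bar>C v\<bar> \<le> \<bar>L (pt v) - F (pt v)\<bar>" if "v \<in> U" for v
  proof -
    have "L (pt v) - F (pt v) = C v * coset_jump v (pt v)" unfolding L_def rep_pt[OF that] by simp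
    moreover have "1 \<le> coset_jump v (pt v)" unfolding pt_def by (rule coset_jump_ge_1)
    ultimately show ?thesis using mult_left_mono[of 1 "coset_jump v (pt v)" "\<bar>C v\<bar>"] by (simp add: abs_mult)
  qed
  have "(\<Sum>v\<in>U. \<bar>C v\<bar>) \<le> (\<Sum>v\<in>U. \<bar>L (pt v) - F (pt v)\<bar>)" by (rule sum_mono) (rule jump_ge)
  also have "\<dots> = (\<Sum>p\<in>pt ` U. \<bar>L p - F p\<bar>)" by (simp add: sum.reindex[OF inj])
  also have "\<dots> \<le> TV01 F"
    by (intro sum_right_jumps_le_TV01 finite_imageI U pt_U \<open>\<And>p. p \<in> pt ` U \<Longrightarrow> (F \<longlongrightarrow> L p) (at_right p)\<close>)
       (unfold F_def, intro bounded_var01_diff bounded_var01_stair_comb U(1) bv)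
  finally show ?thesis unfolding F_def .
qed

section \<open>Sequential closures in BV[0,1]\<close>

definition bv_seq_closure :: "(real \<Rightarrow> real) set \<Rightarrow> (real \<Rightarrow> real) set" where
  "bv_seq_closure A = {f \<in> BV01. \<exists>h. (\<forall>k. h k \<in> A) \<and> (\<lambda>k. bv_norm (\<lambda>x. h k x - f x)) \<longlonglongrightarrow> 0}"

lemma bv_seq_closureE:
  assumes "f \<in> bv_seq_closure A"
  obtains h where "f \<in> BV01" "\<And>k. h k \<in> A" "(\<lambda>k. bv_norm (\<lambda>x. h k x - f x)) \<longlonglongrightarrow> 0"
  using assms unfolding bv_seq_closure_def by blast

lemma bv_seq_closure_BV01: "bv_seq_closure A \<subseteq> BV01"
  unfolding bv_seq_closure_def by blast

lemma bv_norm_tendsto_0_comparison: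
  assumes "\<And>k. bounded_var01 (F k)" "\<And>k. bv_norm (F k) \<le> a k" "a \<longlonglongrightarrow> 0"
  shows "(\<lambda>k. bv_norm (F k)) \<longlonglongrightarrow> 0"
  by (rule Lim_null_comparison[OF always_eventually assms(3)]) (use assms bv_norm_nonneg in auto)

lemma zero_in_bv_seq_closure: "(\<lambda>x. 0) \<in> A \<Longrightarrow> (\<lambda>x. 0) \<in> bv_seq_closure A"
  unfolding bv_seq_closure_def mem_Collect_eq using BV01_zero
  by (intro conjI exI[of _ "\<lambda>_ x. 0"]) (simp_all add: bv_norm_zero)

lemma bv_seq_closure_add:
  assumes A: "A \<subseteq> BV01" and add: "\<And>f g. f \<in> A \<Longrightarrow> g \<in> A \<Longrightarrow> (\<lambda>x. f x + g x) \<in> A"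
    and fA: "f \<in> bv_seq_closure A" and gA: "g \<in> bv_seq_closure A"
  shows "(\<lambda>x. f x + g x) \<in> bv_seq_closure A"
proof -
  obtain hf where f: "f \<in> BV01" "\<And>k. hf k \<in> A" "(\<lambda>k. bv_norm (\<lambda>x. hf k x - f x)) \<longlonglongrightarrow> 0"
    using fA unfolding bv_seq_closure_def by blast
  obtain hg where g: "g \<in> BV01" "\<And>k. hg k \<in> A" "(\<lambda>k. bv_norm (\<lambda>x. hg k x - g x)) \<longlonglongrightarrow> 0"
    using gA unfolding bv_seq_closure_def by blast
  have bv: "bounded_var01 (\<lambda>x. hf k x - f x)" "bounded_var01 (\<lambda>x. hg k x - g x)" for k
    using f(1,2) g(1,2) A bounded_var01_diff[OF BV01_bounded_var BV01_bounded_var] by blast+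
  have "(\<lambda>k. bv_norm (\<lambda>x. (hf k x + hg k x) - (f x + g x))) \<longlonglongrightarrow> 0"
  proof (rule bv_norm_tendsto_0_comparison)
    fix k
    have eq: "(\<lambda>x. (hf k x + hg k x) - (f x + g x)) = (\<lambda>x. (hf k x - f x) + (hg k x - g x))" by auto
    show "bounded_var01 (\<lambda>x. (hf k x + hg k x) - (f x + g x))"
      unfolding eq by (rule bounded_var01_add(1)[OF bv])
    show "bv_norm (\<lambda>x. (hf k x + hg k x) - (f x + g x))
        \<le> bv_norm (\<lambda>x. hf k x - f x) + bv_norm (\<lambda>x. hg k x - g x)"
      unfolding eq by (rule bv_norm_add_le[OF bv])
  qed (use tendsto_add[OF f(3) g(3)] in simp)
  moreover have "(\<lambda>x. f x + g x) \<in> BV01" using f(1) g(1) by (rule BV01_add)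
  moreover have "(\<lambda>x. hf k x + hg k x) \<in> A" for k using f(2) g(2) by (rule add)
  ultimately show ?thesis
    unfolding bv_seq_closure_def mem_Collect_eq by (intro conjI exI[of _ "\<lambda>k x. hf k x + hg k x"]) simp_all
qed

lemma bv_seq_closure_scale:
  assumes A: "A \<subseteq> BV01" and scale: "\<And>f. f \<in> A \<Longrightarrow> (\<lambda>x. c * f x) \<in> A"
    and fA: "f \<in> bv_seq_closure A"
  shows "(\<lambda>x. c * f x) \<in> bv_seq_closure A"
proof -
  obtain hf where f: "f \<in> BV01" "\<And>k. hf k \<in> A" "(\<lambda>k. bv_norm (\<lambda>x. hf k x - f x)) \<longlonglongrightarrow> 0"
    using fA unfolding bv_seq_closure_def by blast
  have bv: "bounded_var01 (\<lambda>x. hf k x - f x)" for k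
    using f(1,2) A bounded_var01_diff[OF BV01_bounded_var BV01_bounded_var] by blast
  have "(\<lambda>k. bv_norm (\<lambda>x. c * hf k x - c * f x)) \<longlonglongrightarrow> 0"
  proof (rule bv_norm_tendsto_0_comparison)
    fix k
    have eq: "(\<lambda>x. c * hf k x - c * f x) = (\<lambda>x. c * (hf k x - f x))" by (auto simp: algebra_simps)
    show "bounded_var01 (\<lambda>x. c * hf k x - c * f x)"
      unfolding eq by (rule bounded_var01_scale(1)[OF bv])
    show "bv_norm (\<lambda>x. c * hf k x - c * f x) \<le> \<bar>c\<bar> * bv_norm (\<lambda>x. hf k x - f x)"
      unfolding eq by (rule bv_norm_scale_le[OF bv])
  qed (use tendsto_mult[OF tendsto_const f(3), of "\<bar>c\<bar>"] in simp)
  moreover have "(\<lambda>x. c * f x) \<in> BV01" using f(1) by (rule BV01_scale)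
  moreover have "(\<lambda>x. c * hf k x) \<in> A" for k using f(2) by (rule scale)
  ultimately show ?thesis
    unfolding bv_seq_closure_def mem_Collect_eq by (intro conjI exI[of _ "\<lambda>k x. c * hf k x"]) simp_all
qed

lemma bv_linear_subspace_bv_seq_closure:
  assumes "A \<subseteq> BV01" "(\<lambda>x. 0) \<in> A"
    and "\<And>f g. f \<in> A \<Longrightarrow> g \<in> A \<Longrightarrow> (\<lambda>x. f x + g x) \<in> A"
    and "\<And>c f. f \<in> A \<Longrightarrow> (\<lambda>x. c * f x) \<in> A"
  shows "bv_linear_subspace (bv_seq_closure A)"
  unfolding bv_linear_subspace_def
proof (intro conjI ballI allI bv_seq_closure_BV01 zero_in_bv_seq_closure assms(2))
  show "(\<lambda>x. f x + g x) \<in> bv_seq_closure A" if "f \<in> bv_seq_closure A" "g \<in> bv_seq_closure A" for f g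
    using bv_seq_closure_add[of A f g] assms(1,3) that by blast
  show "(\<lambda>x. c * f x) \<in> bv_seq_closure A" if "f \<in> bv_seq_closure A" for c f
    using bv_seq_closure_scale[of A c f] assms(1,4) that by blast
qed

lemma bv_closed_bv_seq_closure:
  assumes A: "A \<subseteq> BV01"
  shows "bv_closed (bv_seq_closure A)"
  unfolding bv_closed_def
proof (intro allI impI, elim conjE)
  fix g f assume g: "\<forall>n. g n \<in> bv_seq_closure A" and f: "f \<in> BV01"
    and lim: "(\<lambda>n. bv_norm (\<lambda>x. g n x - f x)) \<longlonglongrightarrow> 0"
  have "\<exists>h\<in>A. bv_norm (\<lambda>x. h x - g n x) < 1 / (real n + 1)" for n
  proof -
    obtain h where h: "\<And>k. h k \<in> A" "(\<lambda>k. bv_norm (\<lambda>x. h k x - g n x)) \<longlonglongrightarrow> 0"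
      using g unfolding bv_seq_closure_def by blast
    have "eventually (\<lambda>k. bv_norm (\<lambda>x. h k x - g n x) < 1 / (real n + 1)) sequentially"
      by (rule order_tendstoD(2)[OF h(2)]) simp
    then obtain k where "bv_norm (\<lambda>x. h k x - g n x) < 1 / (real n + 1)"
      by (auto simp: eventually_sequentially)
    then show ?thesis using h(1) by blast
  qed
  then obtain H where H: "\<And>n. H n \<in> A" "\<And>n. bv_norm (\<lambda>x. H n x - g n x) < 1 / (real n + 1)"
    by metis
  have "g n \<in> BV01" for n using g bv_seq_closure_BV01 by blast
  then have bv: "bounded_var01 f" "\<And>n. bounded_var01 (g n)" "\<And>n. bounded_var01 (H n)"
    using f H(1) A by (auto intro: BV01_bounded_var)
  have "(\<lambda>n. bv_norm (\<lambda>x. H n x - f x)) \<longlonglongrightarrow> 0"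
  proof (rule bv_norm_tendsto_0_comparison)
    fix n
    show "bounded_var01 (\<lambda>x. H n x - f x)" by (intro bounded_var01_diff bv)
    show "bv_norm (\<lambda>x. H n x - f x) \<le> 1 / (real n + 1) + bv_norm (\<lambda>x. g n x - f x)"
      using bv_norm_diff_triangle[OF bv(3)[of n] bv(2)[of n] bv(1)] H(2)[of n] by linarith
  next
    show "(\<lambda>n. 1 / (real n + 1) + bv_norm (\<lambda>x. g n x - f x)) \<longlonglongrightarrow> 0"
      using tendsto_add[OF LIMSEQ_inverse_real_of_nat lim] by (simp add: inverse_eq_divide add.commute)
  qed
  then show "f \<in> bv_seq_closure A"
    unfolding bv_seq_closure_def using f H(1) by auto
qed

lemma not_bv_separable_if_separated:
  assumes "uncountable I" "g ` I \<subseteq> S" "S \<subseteq> BV01" "e > 0"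
    and sep: "\<And>u v. u \<in> I \<Longrightarrow> v \<in> I \<Longrightarrow> u \<noteq> v \<Longrightarrow> e \<le> bv_norm (\<lambda>x. g u x - g v x)"
  shows "\<not> bv_separable S"
proof
  assume "bv_separable S"
  then obtain D where D: "countable D" "D \<subseteq> S"
    and dense: "\<forall>f\<in>S. \<forall>e>0. \<exists>d\<in>D. bv_norm (\<lambda>x. f x - d x) < e"
    unfolding bv_separable_def by blast
  have "\<forall>u\<in>I. \<exists>d\<in>D. bv_norm (\<lambda>x. g u x - d x) < e / 2"
  proof
    fix u assume "u \<in> I"
    then have "g u \<in> S" using assms(2) by blast
    then show "\<exists>d\<in>D. bv_norm (\<lambda>x. g u x - d x) < e / 2"
      by (rule dense[rule_format]) (use assms(4) in simp)
  qed
  then obtain d where "\<forall>u\<in>I. d u \<in> D \<and> bv_norm (\<lambda>x. g u x - d u x) < e / 2"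
    unfolding Bex_def by (rule bchoice[THEN exE])
  then have d: "\<And>u. u \<in> I \<Longrightarrow> d u \<in> D" "\<And>u. u \<in> I \<Longrightarrow> bv_norm (\<lambda>x. g u x - d u x) < e / 2"
    by blast+
  have "\<not> inj_on d I"
  proof
    assume "inj_on d I"
    moreover have "countable (d ` I)" using D(1) d(1) by (blast intro: countable_subset)
    ultimately show False using assms(1) countable_image_inj_on by blast
  qed
  then obtain u v where uv: "u \<in> I" "v \<in> I" "u \<noteq> v" "d u = d v" unfolding inj_on_def by blast
  have bv: "bounded_var01 (g u)" "bounded_var01 (g v)" "bounded_var01 (d u)"
    using uv d(1) D(2) assms(2,3) BV01_bounded_var by blast+
  have "bv_norm (\<lambda>x. g u x - g v x) \<le> bv_norm (\<lambda>x. g u x - d u x) + bv_norm (\<lambda>x. d v x - g v x)"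
    using bv_norm_diff_triangle[OF bv(1,3,2)] uv(4) by simp
  also have "\<dots> < e"
    using d(2)[OF uv(1)] d(2)[OF uv(2)] bv_norm_diff_commute[OF bv(2,3)] uv(4) by simp
  finally show False using sep[OF uv(1-3)] by simp
qed

section \<open>The closed span of the staircases\<close>

definition stair_span :: "(real \<Rightarrow> real) set" where
  "stair_span = {stair_comb U C | U C. finite U \<and> U \<subseteq> rat_reps}"

definition stair_space :: "(real \<Rightarrow> real) set" where
  "stair_space = bv_seq_closure stair_span"

lemma stair_span_BV01: "stair_span \<subseteq> BV01"
  unfolding stair_span_def using stair_comb_BV01 by blast

lemma zero_in_stair_span: "(\<lambda>x. 0) \<in> stair_span"
  unfolding stair_span_def by (auto intro!: exI[of _ "{}"] simp: stair_comb_def)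

lemma stair_span_add:
  assumes "f \<in> stair_span" "g \<in> stair_span"
  shows "(\<lambda>x. f x + g x) \<in> stair_span"
proof -
  obtain U1 C1 U2 C2 where UC: "f = stair_comb U1 C1" "g = stair_comb U2 C2"
    "finite U1" "finite U2" "U1 \<subseteq> rat_reps" "U2 \<subseteq> rat_reps"
    using assms unfolding stair_span_def by blast
  define C where "C v = (if v \<in> U1 then C1 v else 0) + (if v \<in> U2 then C2 v else 0)" for v
  have "stair_comb (U1 \<union> U2) C x = stair_comb U1 C1 x + stair_comb U2 C2 x" for x
  proof -
    have "C v * coset_stair v x
        = (if v \<in> U1 then C1 v * coset_stair v x else 0) + (if v \<in> U2 then C2 v * coset_stair v x else 0)" for v
      by (simp add: C_def distrib_right)
    then have "stair_comb (U1 \<union> U2) C x = (\<Sum>v\<in>U1 \<union> U2. if v \<in> U1 then C1 v * coset_stair v x else 0)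
          + (\<Sum>v\<in>U1 \<union> U2. if v \<in> U2 then C2 v * coset_stair v x else 0)"
      unfolding stair_comb_def by (simp add: sum.distrib)
    also have "\<dots> = stair_comb U1 C1 x + stair_comb U2 C2 x"
      using UC(3,4) by (simp add: sum.If_cases Int_absorb1 stair_comb_def)
    finally show ?thesis .
  qed
  then have "(\<lambda>x. f x + g x) = stair_comb (U1 \<union> U2) C" using UC(1,2) by auto
  then show ?thesis unfolding stair_span_def using UC(3-6) by blast
qed

lemma stair_span_scale:
  assumes "f \<in> stair_span"
  shows "(\<lambda>x. c * f x) \<in> stair_span"
proof -
  obtain U C where UC: "f = stair_comb U C" "finite U" "U \<subseteq> rat_reps"
    using assms unfolding stair_span_def by blast
  have "(\<lambda>x. c * f x) = stair_comb U (\<lambda>v. c * C v)"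
    using UC(1) by (auto simp: stair_comb_def sum_distrib_left mult.assoc)
  then show ?thesis unfolding stair_span_def using UC(2,3) by blast
qed

lemma stair_space_BV01: "stair_space \<subseteq> BV01"
  unfolding stair_space_def by (rule bv_seq_closure_BV01)

lemma bv_linear_subspace_stair_space: "bv_linear_subspace stair_space"
  unfolding stair_space_def
  by (intro bv_linear_subspace_bv_seq_closure stair_span_BV01 zero_in_stair_span stair_span_add stair_span_scale)

lemma bv_closed_stair_space: "bv_closed stair_space"
  unfolding stair_space_def by (intro bv_closed_bv_seq_closure stair_span_BV01)

lemma coset_stair_in_stair_space:
  assumes "u \<in> rat_reps"
  shows "coset_stair u \<in> stair_space"
proof -
  have "coset_stair u = stair_comb {u} (\<lambda>_. 1)" by (simp add: stair_comb_def)
  then have "coset_stair u \<in> stair_span" unfolding stair_span_def using assms by blast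
  then show ?thesis
    unfolding stair_space_def bv_seq_closure_def
    using coset_stair_BV01 by (auto simp: bv_norm_zero intro!: exI[of _ "\<lambda>_. coset_stair u"])
qed

lemma bv_norm_coset_stair_diff_ge:
  assumes "u \<in> rat_reps" "v \<in> rat_reps" "u \<noteq> v"
  shows "2 \<le> bv_norm (\<lambda>x. coset_stair u x - coset_stair v x)"
proof -
  define C where "C w = (if w = u then 1 else - 1 :: real)" for w
  have "(\<Sum>w\<in>{u, v}. \<bar>C w\<bar>) \<le> TV01 (\<lambda>x. stair_comb {u, v} C x - 0)"
    using assms by (intro sum_abs_coeffs_le_TV01 bounded_var01_zero) auto
  moreover have "(\<Sum>w\<in>{u, v}. \<bar>C w\<bar>) = 2" using assms unfolding C_def by simp
  moreover have "(\<lambda>x. stair_comb {u, v} C x - 0) = (\<lambda>x. coset_stair u x - coset_stair v x)"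
    using assms unfolding C_def by (auto simp: stair_comb_def)
  ultimately show ?thesis using TV01_le_bv_norm[of "\<lambda>x. coset_stair u x - coset_stair v x"] by simp
qed

lemma stair_spaceE:
  assumes "f \<in> stair_space"
  obtains U C where "f \<in> BV01" "\<And>k. finite (U k)" "\<And>k. U k \<subseteq> rat_reps"
    "(\<lambda>k. bv_norm (\<lambda>x. stair_comb (U k) (C k) x - f x)) \<longlonglongrightarrow> 0"
proof -
  obtain h where h: "f \<in> BV01" "\<And>k. h k \<in> stair_span" "(\<lambda>k. bv_norm (\<lambda>x. h k x - f x)) \<longlonglongrightarrow> 0"
    using assms unfolding stair_space_def by (rule bv_seq_closureE) blast
  have "\<forall>k. \<exists>U C. h k = stair_comb U C \<and> finite U \<and> U \<subseteq> rat_reps"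
    using h(2) unfolding stair_span_def by blast
  then obtain U C where UC: "\<And>k. h k = stair_comb (U k) (C k)" "\<And>k. finite (U k)" "\<And>k. U k \<subseteq> rat_reps"
    by metis
  show ?thesis by (rule that[OF h(1) UC(2,3)]) (use h(3) UC(1) in simp)
qed

text \<open>By the key estimate the approximating coefficients tend to \<open>0\<close>, and then so does the
  sup norm of the approximants.\<close>

lemma stair_space_right_continuous_eq_0:
  assumes f: "f \<in> stair_space" and rc: "\<And>p. 0 \<le> p \<Longrightarrow> p < 1 \<Longrightarrow> (f \<longlongrightarrow> f p) (at_right p)"
  shows "f = (\<lambda>_. 0)"
proof
  fix x
  obtain U C where fBV: "f \<in> BV01" and U: "\<And>k. finite (U k)" "\<And>k. U k \<subseteq> rat_reps"
    and lim: "(\<lambda>k. bv_norm (\<lambda>x. stair_comb (U k) (C k) x - f x)) \<longlonglongrightarrow> 0"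
    using stair_spaceE[OF f] by blast
  have bvf: "bounded_var01 f" using fBV by (rule BV01_bounded_var)
  show "f x = 0"
  proof (cases "x \<in> {0..1}")
    case False
    then show ?thesis using fBV unfolding BV01_def by auto
  next
    case True
    have "\<bar>f x\<bar> \<le> 3 * bv_norm (\<lambda>x. stair_comb (U k) (C k) x - f x)" for k
    proof -
      have bv: "bounded_var01 (\<lambda>x. stair_comb (U k) (C k) x - f x)"
        by (intro bounded_var01_diff bounded_var01_stair_comb U bvf)
      have "(\<Sum>v\<in>U k. \<bar>C k v\<bar>) \<le> bv_norm (\<lambda>x. stair_comb (U k) (C k) x - f x)"
        using sum_abs_coeffs_le_TV01[OF U(1)[of k] U(2)[of k] bvf rc, of "C k"] TV01_le_bv_norm by (meson order_trans)
      then show ?thesis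
        using abs_le_bv_norm[OF bv True] abs_stair_comb_le[of "U k" "C k" x] by linarith
    qed
    then have "\<bar>f x\<bar> \<le> 3 * 0"
      by (intro LIMSEQ_le_const[OF tendsto_mult[OF tendsto_const lim]]) auto
    then show ?thesis by simp
  qed
qed

lemma tendsto_stair_coeff_jump:
  assumes bvf: "bounded_var01 f" and U: "\<And>k. finite (U k)" "\<And>k. U k \<subseteq> rat_reps"
    and lim: "(\<lambda>k. bv_norm (\<lambda>x. stair_comb (U k) (C k) x - f x)) \<longlonglongrightarrow> 0"
    and q: "0 \<le> q" "q < 1" and Lq: "(f \<longlongrightarrow> Lq) (at_right q)"
  shows "(\<lambda>k. (if rat_rep q \<in> U k then C k (rat_rep q) else 0) * coset_jump (rat_rep q) q) \<longlonglongrightarrow> Lq - f q"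
proof (rule LIM_zero_cancel, rule Lim_null_comparison[OF always_eventually lim], rule allI)
  fix k
  define J where "J = (if rat_rep q \<in> U k then C k (rat_rep q) else 0) * coset_jump (rat_rep q) q"
  define F where "F = (\<lambda>x. stair_comb (U k) (C k) x - f x)"
  have "(F \<longlongrightarrow> (stair_comb (U k) (C k) q + J) - Lq) (at_right q)"
    unfolding F_def J_def using stair_comb_right_limit[OF U(1)[of k] U(2)[of k] q, of "C k"]
    by (intro tendsto_diff Lq) (simp split: if_splits)
  then have "(\<Sum>p\<in>{q}. \<bar>((stair_comb (U k) (C k) q + J) - Lq) - F p\<bar>) \<le> TV01 F"
    using q by (intro sum_right_jumps_le_TV01)
       (auto simp: F_def intro: bounded_var01_diff bounded_var01_stair_comb U bvf)
  then show "norm (J - (Lq - f q)) \<le> bv_norm F"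
    using TV01_le_bv_norm[of F] unfolding F_def by simp
qed

text \<open>A jump of an element of \<open>stair_space\<close> at \<open>p\<close> is a nonzero multiple of the jump of the
  staircase of \<open>p + \<rat>\<close>, hence propagates to the whole coset.\<close>

lemma stair_space_right_jumps:
  assumes f: "f \<in> stair_space"
    and p: "0 \<le> p" "p < 1" "(f \<longlongrightarrow> L) (at_right p)" "L \<noteq> f p"
    and q: "0 \<le> q" "q < 1" "q - p \<in> \<rat>" "(f \<longlongrightarrow> Lq) (at_right q)"
  shows "Lq \<noteq> f q"
proof -
  obtain U C where fBV: "f \<in> BV01" and U: "\<And>k. finite (U k)" "\<And>k. U k \<subseteq> rat_reps"
    and lim: "(\<lambda>k. bv_norm (\<lambda>x. stair_comb (U k) (C k) x - f x)) \<longlonglongrightarrow> 0"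
    using stair_spaceE[OF f] by blast
  have bvf: "bounded_var01 f" using fBV by (rule BV01_bounded_var)
  define u where "u = rat_rep p"
  define c where "c k = (if u \<in> U k then C k u else 0)" for k
  have rep_q: "rat_rep q = u" unfolding u_def by (rule rat_rep_eq[OF q(3)])
  have pos: "coset_jump u p > 0" "coset_jump u q > 0"
    using coset_jump_pos[OF diff_rat_rep_Rats p(1,2)] coset_jump_pos[OF diff_rat_rep_Rats q(1,2)] rep_q
    unfolding u_def by simp_all
  have "(\<lambda>k. c k * coset_jump u p) \<longlonglongrightarrow> L - f p"
    using tendsto_stair_coeff_jump[OF bvf U lim p(1-3)] unfolding c_def u_def .
  then have "(\<lambda>k. c k * coset_jump u p / coset_jump u p * coset_jump u q)
      \<longlonglongrightarrow> (L - f p) / coset_jump u p * coset_jump u q"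
    by (intro tendsto_intros) (use pos in auto)
  moreover have "(\<lambda>k. c k * coset_jump u q) \<longlonglongrightarrow> Lq - f q"
    using tendsto_stair_coeff_jump[OF bvf U lim q(1,2,4)] unfolding c_def rep_q .
  ultimately have "Lq - f q = (L - f p) / coset_jump u p * coset_jump u q"
    using pos by (auto intro: LIMSEQ_unique)
  then show ?thesis using pos p(4) by auto
qed

lemma jump_pointsI:
  assumes bv: "bounded_var01 f" and q: "0 < q" "q < 1"
    and Lq: "(f \<longlongrightarrow> Lq) (at_right q)" "Lq \<noteq> f q"
  shows "q \<in> jump_points f"
proof -
  have "\<not> continuous (at q within {0..1}) f"
  proof
    assume "continuous (at q within {0..1}) f"
    then have "(f \<longlongrightarrow> f q) (at q within {q..1})"
      unfolding continuous_within by (rule tendsto_within_subset) (use q in auto)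
    then have "(f \<longlongrightarrow> f q) (at_right q)" using at_within_Icc_at_right[OF q(2)] by simp
    then show False using tendsto_unique[OF trivial_limit_at_right_real Lq(1)] Lq(2) by auto
  qed
  moreover obtain Lm where "(f \<longlongrightarrow> Lm) (at_left q)" using bounded_var01_left_limit[OF bv] q by fastforce
  ultimately show ?thesis unfolding jump_points_def using q Lq by auto
qed

lemma Icc01_subset_closure_rat_coset:
  fixes J :: "real set"
  assumes "\<And>q. 0 < q \<Longrightarrow> q < 1 \<Longrightarrow> q - u \<in> \<rat> \<Longrightarrow> q \<in> J"
  shows "{0..1} \<subseteq> closure J"
proof
  fix x :: real assume x: "x \<in> {0..1}"
  show "x \<in> closure J"
    unfolding closure_approachable
  proof (intro allI impI)
    fix e :: real assume e: "e > 0"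
    obtain a b where ab: "0 \<le> a" "a < b" "b \<le> 1" "\<And>y. a < y \<Longrightarrow> y < b \<Longrightarrow> dist y x < e"
    proof (cases "x < 1")
      case True
      show ?thesis by (rule that[of x "min 1 (x + e)"]) (use x e True in \<open>auto simp: dist_real_def\<close>)
    next
      case False
      then show ?thesis by (intro that[of "max 0 (1 - e)" 1]) (use x e in \<open>auto simp: dist_real_def\<close>)
    qed
    obtain r where r: "r \<in> \<rat>" "a - u < r" "r < b - u" using Rats_dense_in_real[of "a - u" "b - u"] ab by auto
    have "u + r \<in> J" by (rule assms) (use r ab in auto)
    moreover have "dist (u + r) x < e" using ab(4)[of "u + r"] r by auto
    ultimately show "\<exists>y\<in>J. dist y x < e" by blast
  qed
qed

lemma stair_space_Fcal:
  assumes f: "f \<in> stair_space" and nz: "f \<noteq> (\<lambda>_. 0)"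
  shows "f \<in> Fcal"
proof -
  have bvf: "bounded_var01 f" using f stair_space_BV01 by (blast intro: BV01_bounded_var)
  obtain p where p: "0 \<le> p" "p < 1" "\<not> (f \<longlongrightarrow> f p) (at_right p)"
    using stair_space_right_continuous_eq_0[OF f] nz by blast
  obtain L where L: "(f \<longlongrightarrow> L) (at_right p)" using bounded_var01_right_limit[OF bvf p(1,2)] by blast
  have "q \<in> jump_points f" if q: "0 < q" "q < 1" "q - p \<in> \<rat>" for q
  proof -
    obtain Lq where Lq: "(f \<longlongrightarrow> Lq) (at_right q)" using bounded_var01_right_limit[OF bvf] q by fastforce
    have "Lq \<noteq> f q"
      using stair_space_right_jumps[OF f p(1,2) L _ _ q(2,3) Lq] L p(3) q(1) by auto
    then show ?thesis using jump_pointsI[OF bvf q(1,2) Lq] by blast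
  qed
  then have "{0..1} \<subseteq> closure (jump_points f)" by (rule Icc01_subset_closure_rat_coset)
  then show ?thesis unfolding Fcal_def using bvf by blast
qed

theorem mainTheorem6:
  shows "\<exists>S. bv_linear_subspace S \<and> bv_closed S \<and> \<not> bv_separable S
             \<and> S \<subseteq> Fcal \<union> {\<lambda>_. 0}"
proof (intro exI conjI)
  show "bv_linear_subspace stair_space" by (rule bv_linear_subspace_stair_space)
  show "bv_closed stair_space" by (rule bv_closed_stair_space)
  show "\<not> bv_separable stair_space"
    by (rule not_bv_separable_if_separated[OF uncountable_rat_reps _ stair_space_BV01, where e=2])
       (auto intro: coset_stair_in_stair_space bv_norm_coset_stair_diff_ge)
  show "stair_space \<subseteq> Fcal \<union> {\<lambda>_. 0}" using stair_space_Fcal by blast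
qed

end
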